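(* For every set $X$, both $\mathcal{PI}^{\ast}_X=(P_X,\star)$ and $\overline{\mathcal{PI}^{\ast}}_X=(P_X,\circ)$ are inverse semigroups.
   Context: Let $X$ be a set and $X'=\{x':x\in X\}$ a disjoint copy of $X$. Let $P_X$ be the set of all partitions of $X\cup X'$ each of whose blocks is either a singleton (called a point) or a generalised line, i.e. a subset meeting both $X$ and $X'$. An element is determined by its generalised lines; write $\alpha=\{A_i\cup B_i'\}_{i\in I}$, where the nonempty sets $A_i\subseteq X$ are pairwise disjoint, the nonempty sets $B_i\subseteq X$ are pairwise disjoint, $B_i'=\{b':b\in B_i\}$, and all remaining elements of $X\cup X'$ are points. Product $\star$: let $X''$ be a third copy of $X$; regard $\alpha$ as a partition of $X\cup X''$ (replacing each $x'$ by $x''$) and $\beta$ as a partition of $X''\cup X'$ (replacing each $x\in X$ by $x''$), and let $\sim$ be the smallest equivalence relation on $X\cup X''\cup X'$ containing all blocks of both. Then $\alpha\star\beta$ is the partition of $X\cup X'$ in which two distinct elements $u,v$ lie in the same block iff $u\sim v$ and the $\sim$-class of $u$ contains no singleton block of (the relabelled) $\alpha$ or $\beta$. Product $\circ$: $\alpha\circ\beta$ is the element of $P_X$ whose generalised lines are exactly the sets $A\cup D'$ such that $A\cup B'$ is a generalised line of $\alpha$ and $B\cup D'$ is a generalised line of $\beta$ for the same set $B$; all other elements are points. *)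

theory Defs
  imports Main "HOL-Library.Disjoint_Sets"
begin

text \<open>X is encoded as Inl ` X, its copy X' as Inr ` X.\<close>

definition ground :: "'a set \<Rightarrow> ('a + 'a) set" where
  "ground X = Inl ` X \<union> Inr ` X"

definition gen_line :: "'a set \<Rightarrow> ('a + 'a) set \<Rightarrow> bool" where
  "gen_line X B \<longleftrightarrow> B \<inter> Inl ` X \<noteq> {} \<and> B \<inter> Inr ` X \<noteq> {}"

definition PX :: "'a set \<Rightarrow> ('a + 'a) set set set" where
  "PX X = {P. partition_on (ground X) P \<and>
              (\<forall>B\<in>P. (\<exists>z. B = {z}) \<or> gen_line X B)}"

text \<open>Three copies: X as Inl x, X'' as Inr (Inl x), X' as Inr (Inr x).\<close>
fun relabel_left :: "'a + 'a \<Rightarrow> 'a + 'a + 'a" where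
  "relabel_left (Inl x) = Inl x"
| "relabel_left (Inr x) = Inr (Inl x)"

fun relabel_right :: "'a + 'a \<Rightarrow> 'a + 'a + 'a" where
  "relabel_right (Inl x) = Inr (Inl x)"
| "relabel_right (Inr x) = Inr (Inr x)"

fun embed_outer :: "'a + 'a \<Rightarrow> 'a + 'a + 'a" where
  "embed_outer (Inl x) = Inl x"
| "embed_outer (Inr x) = Inr (Inr x)"

definition star_blocks :: "('a + 'a) set set \<Rightarrow> ('a + 'a) set set \<Rightarrow> ('a + 'a + 'a) set set" where
  "star_blocks \<alpha> \<beta> = (image relabel_left) ` \<alpha> \<union> (image relabel_right) ` \<beta>"

text \<open>Smallest equivalence relation on X \<union> X'' \<union> X' containing all blocks
  (the blocks cover this set, so the transitive closure of the block relation suffices).\<close>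
definition star_sim :: "('a + 'a) set set \<Rightarrow> ('a + 'a) set set \<Rightarrow> ('a + 'a + 'a) rel" where
  "star_sim \<alpha> \<beta> = (\<Union>B\<in>star_blocks \<alpha> \<beta>. B \<times> B)\<^sup>+"

definition star_prod :: "'a set \<Rightarrow> ('a + 'a) set set \<Rightarrow> ('a + 'a) set set \<Rightarrow> ('a + 'a) set set" where
  "star_prod X \<alpha> \<beta> = ground X //
     {(u, v). u \<in> ground X \<and> v \<in> ground X \<and>
        (u = v \<or>
         ((embed_outer u, embed_outer v) \<in> star_sim \<alpha> \<beta> \<and>
          \<not> (\<exists>s. {s} \<in> star_blocks \<alpha> \<beta> \<and> s \<in> star_sim \<alpha> \<beta> `` {embed_outer u})))}"

definition circ_lines :: "('a + 'a) set set \<Rightarrow> ('a + 'a) set set \<Rightarrow> ('a + 'a) set set" where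
  "circ_lines \<alpha> \<beta> = {Inl ` A \<union> Inr ` D | A B D.
      A \<noteq> {} \<and> B \<noteq> {} \<and> D \<noteq> {} \<and>
      Inl ` A \<union> Inr ` B \<in> \<alpha> \<and> Inl ` B \<union> Inr ` D \<in> \<beta>}"

definition circ_prod :: "'a set \<Rightarrow> ('a + 'a) set set \<Rightarrow> ('a + 'a) set set \<Rightarrow> ('a + 'a) set set" where
  "circ_prod X \<alpha> \<beta> = circ_lines \<alpha> \<beta> \<union>
     {{z} | z. z \<in> ground X \<and> (\<forall>L\<in>circ_lines \<alpha> \<beta>. z \<notin> L)}"

definition inverse_semigroup :: "'b set \<Rightarrow> ('b \<Rightarrow> 'b \<Rightarrow> 'b) \<Rightarrow> bool" where
  "inverse_semigroup S m \<longleftrightarrow>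
     (\<forall>a\<in>S. \<forall>b\<in>S. m a b \<in> S) \<and>
     (\<forall>a\<in>S. \<forall>b\<in>S. \<forall>c\<in>S. m (m a b) c = m a (m b c)) \<and>
     (\<forall>a\<in>S. \<exists>!b. b \<in> S \<and> m (m a b) a = a \<and> m (m b a) b = b)"

end

theory Submission
  imports Defs
begin

text \<open>
  Both products are represented faithfully by partial bijections between subsets of \<open>X\<close>, composed
  as relations: for \<open>\<circ>\<close>, \<open>\<alpha>\<close> is sent to the relation \<open>A \<mapsto> B\<close> given by its generalised lines
  \<open>A \<union> B'\<close>; for \<open>\<star>\<close>, to the relation \<open>S \<mapsto> T\<close> given by all unions \<open>S \<union> T'\<close> of generalised lines
  of \<open>\<alpha>\<close>. These maps are injective on \<open>P\<^sub>X\<close>, send the mirror image of \<open>\<alpha>\<close> (exchange \<open>X\<close> and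
  \<open>X'\<close>) to the converse relation, and turn the product into relational composition. For \<open>\<star>\<close> the
  last point holds because a union of generalised lines of \<open>\<alpha> \<star> \<beta>\<close> is the trace on \<open>X \<union> X'\<close>
  of a union \<open>S \<union> M'' \<union> T'\<close> of non-singleton blocks in the three copies, that is, of a union
  \<open>S \<union> M'\<close> of lines of \<open>\<alpha>\<close> matching a union \<open>M \<union> T'\<close> of lines of \<open>\<beta>\<close>. Since partial
  bijections satisfy \<open>R R\<inverse> R = R\<close> and have no other such inverses, a semigroup embedded in them
  with image closed under converse is an inverse semigroup.
\<close>

section \<open>Semigroups of partial bijections\<close>

definition partial_bij :: "('c \<times> 'c) set \<Rightarrow> bool" where
  "partial_bij R \<longleftrightarrow> single_valued R \<and> single_valued (R\<inverse>)"

lemma partial_bij_relcomp_converse_relcomp: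
  assumes "partial_bij R"
  shows "R O R\<inverse> O R = R"
proof
  show "R O R\<inverse> O R \<subseteq> R"
    using assms unfolding partial_bij_def single_valued_def by blast
  show "R \<subseteq> R O R\<inverse> O R"
    by (rule subrelI) (meson converseI relcompI)
qed

lemma partial_bij_inverse_unique:
  assumes "partial_bij F" "partial_bij G" "F O G O F = F" "G O F O G = G"
  shows "G = F\<inverse>"
proof -
  have "G \<subseteq> F\<inverse>" if "partial_bij G" "G O F O G = G" for F G :: "('c \<times> 'c) set"
  proof (rule subrelI)
    fix a b assume "(a, b) \<in> G"
    with \<open>G O F O G = G\<close> obtain c d where "(a, c) \<in> G" "(c, d) \<in> F" "(d, b) \<in> G"
      by blast
    moreover from \<open>partial_bij G\<close> \<open>(a, b) \<in> G\<close> \<open>(a, c) \<in> G\<close> \<open>(d, b) \<in> G\<close>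
    have "c = b" "d = a" unfolding partial_bij_def by (auto dest: single_valuedD)
    ultimately show "(a, b) \<in> F\<inverse>" by simp
  qed
  from this[of G F] this[of F G] assms show ?thesis by auto
qed

lemma inverse_semigroup_partial_bij_rep:
  fixes \<Phi> :: "'b \<Rightarrow> ('c \<times> 'c) set"
  assumes closed: "\<And>a b. a \<in> S \<Longrightarrow> b \<in> S \<Longrightarrow> m a b \<in> S"
    and inj: "inj_on \<Phi> S"
    and hom: "\<And>a b. a \<in> S \<Longrightarrow> b \<in> S \<Longrightarrow> \<Phi> (m a b) = \<Phi> a O \<Phi> b"
    and partial_bij: "\<And>a. a \<in> S \<Longrightarrow> partial_bij (\<Phi> a)"
    and converse: "\<And>a. a \<in> S \<Longrightarrow> \<exists>b\<in>S. \<Phi> b = (\<Phi> a)\<inverse>"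
  shows "inverse_semigroup S m"
proof -
  have hom3: "\<Phi> (m (m a b) c) = \<Phi> a O \<Phi> b O \<Phi> c" if "a \<in> S" "b \<in> S" "c \<in> S" for a b c
    using that by (simp add: closed hom O_assoc)
  have inverse_iff: "m (m a b) a = a \<and> m (m b a) b = b \<longleftrightarrow> \<Phi> b = (\<Phi> a)\<inverse>"
    if "a \<in> S" "b \<in> S" for a b
  proof
    assume "m (m a b) a = a \<and> m (m b a) b = b"
    with that show "\<Phi> b = (\<Phi> a)\<inverse>"
      by (metis hom3 partial_bij partial_bij_inverse_unique)
  next
    assume "\<Phi> b = (\<Phi> a)\<inverse>"
    with that show "m (m a b) a = a \<and> m (m b a) b = b"
      by (metis closed hom3 inj inj_onD converse_converse partial_bij
          partial_bij_relcomp_converse_relcomp)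
  qed
  show ?thesis
    unfolding inverse_semigroup_def
  proof (intro conjI ballI)
    show "m a b \<in> S" if "a \<in> S" "b \<in> S" for a b
      using that by (rule closed)
    show "m (m a b) c = m a (m b c)" if "a \<in> S" "b \<in> S" "c \<in> S" for a b c
      using that by (intro inj_onD[OF inj]) (simp_all add: closed hom O_assoc)
    show "\<exists>!b. b \<in> S \<and> m (m a b) a = a \<and> m (m b a) b = b" if a: "a \<in> S" for a
    proof -
      obtain b where "b \<in> S" "\<Phi> b = (\<Phi> a)\<inverse>"
        using converse[OF a] by blast
      then show ?thesis
        by (metis inverse_iff[OF a] inj_onD[OF inj])
    qed
  qed
qed

section \<open>Partitions of \<open>X \<union> X'\<close>\<close>

lemma Inl_vimage_Un_Inr_vimage: "Inl ` (Inl -` B) \<union> Inr ` (Inr -` B) = B"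
proof (intro equalityI subsetI)
  fix z assume "z \<in> B"
  then show "z \<in> Inl ` (Inl -` B) \<union> Inr ` (Inr -` B)"
    by (cases z) auto
qed auto

lemma Inl_in_ground_iff [simp]: "Inl x \<in> ground X \<longleftrightarrow> x \<in> X"
  and Inr_in_ground_iff [simp]: "Inr x \<in> ground X \<longleftrightarrow> x \<in> X"
  unfolding ground_def by auto

lemma Inl_image_Un_Inr_image_eq_iff:
  "Inl ` A \<union> Inr ` B = Inl ` A' \<union> Inr ` B' \<longleftrightarrow> A = A' \<and> B = B'"
  by blast

lemma Inl_image_Un_Inr_image_Int:
  "(Inl ` A \<union> Inr ` B) \<inter> (Inl ` A' \<union> Inr ` B') = Inl ` (A \<inter> A') \<union> Inr ` (B \<inter> B')"
  by auto

lemma gen_line_Inl_image_Un_Inr_image: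
  assumes "A \<noteq> {}" "B \<noteq> {}" "A \<subseteq> X" "B \<subseteq> X"
  shows "gen_line X (Inl ` A \<union> Inr ` B)"
proof -
  obtain a b where "a \<in> A" "b \<in> B"
    using assms by blast
  with assms have "Inl a \<in> (Inl ` A \<union> Inr ` B) \<inter> Inl ` X" "Inr b \<in> (Inl ` A \<union> Inr ` B) \<inter> Inr ` X"
    by auto
  then show ?thesis
    unfolding gen_line_def by blast
qed

lemma Inl_image_Un_Inr_image_not_singleton:
  assumes "A \<noteq> {}" "B \<noteq> {}"
  shows "Inl ` A \<union> Inr ` B \<noteq> {z}"
proof
  assume singleton: "Inl ` A \<union> Inr ` B = {z}"
  obtain a b where "a \<in> A" "b \<in> B"
    using assms by blast
  then have "Inl a \<in> {z}" "Inr b \<in> {z}"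
    unfolding singleton[symmetric] by auto
  then show False
    by (metis Inl_Inr_False singletonD)
qed

lemma gen_line_not_singleton: "gen_line X B \<Longrightarrow> B \<noteq> {z}"
  unfolding gen_line_def by auto

lemma PX_Union: "\<alpha> \<in> PX X \<Longrightarrow> \<Union>\<alpha> = ground X"
  unfolding PX_def partition_on_def by blast

lemma PX_block_eq: "\<alpha> \<in> PX X \<Longrightarrow> B \<in> \<alpha> \<Longrightarrow> C \<in> \<alpha> \<Longrightarrow> z \<in> B \<Longrightarrow> z \<in> C \<Longrightarrow> B = C"
  unfolding PX_def partition_on_def disjoint_def by blast

lemma PX_block_cases: "\<alpha> \<in> PX X \<Longrightarrow> B \<in> \<alpha> \<Longrightarrow> (\<exists>z. B = {z}) \<or> gen_line X B"
  unfolding PX_def by blast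

lemma PX_eqI:
  assumes "\<alpha> \<in> PX X" "\<beta> \<in> PX X" and lines: "\<And>B. gen_line X B \<Longrightarrow> B \<in> \<alpha> \<longleftrightarrow> B \<in> \<beta>"
  shows "\<alpha> = \<beta>"
proof -
  have "\<alpha> \<subseteq> \<beta>" if \<alpha>: "\<alpha> \<in> PX X" and \<beta>: "\<beta> \<in> PX X"
    and lines: "\<And>B. gen_line X B \<Longrightarrow> B \<in> \<alpha> \<longleftrightarrow> B \<in> \<beta>" for \<alpha> \<beta>
  proof
    fix B assume "B \<in> \<alpha>"
    show "B \<in> \<beta>"
    proof (cases "gen_line X B")
      case False
      with \<open>B \<in> \<alpha>\<close> obtain z where "B = {z}"
        using PX_block_cases[OF \<alpha>] by blast
      with \<open>B \<in> \<alpha>\<close> obtain C where "C \<in> \<beta>" "z \<in> C"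
        using PX_Union[OF \<alpha>] PX_Union[OF \<beta>] by blast
      show ?thesis
        using PX_block_cases[OF \<beta> \<open>C \<in> \<beta>\<close>]
      proof
        assume "gen_line X C"
        with lines \<open>C \<in> \<beta>\<close> have "C = B"
          using PX_block_eq[OF \<alpha> _ \<open>B \<in> \<alpha>\<close> \<open>z \<in> C\<close>] \<open>B = {z}\<close> by blast
        with \<open>gen_line X C\<close> \<open>B = {z}\<close> show ?thesis
          using gen_line_not_singleton by blast
      qed (use \<open>C \<in> \<beta>\<close> \<open>z \<in> C\<close> \<open>B = {z}\<close> in auto)
    qed (use lines \<open>B \<in> \<alpha>\<close> in blast)
  qed
  from this[of \<alpha> \<beta>] this[of \<beta> \<alpha>] assms show ?thesis
    by blast
qed

fun swap_sum :: "'a + 'a \<Rightarrow> 'a + 'a" where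
  "swap_sum (Inl x) = Inr x"
| "swap_sum (Inr x) = Inl x"

lemma swap_sum_swap_sum [simp]: "swap_sum (swap_sum z) = z"
  by (cases z) simp_all

lemma inj_swap_sum: "inj swap_sum"
  by (metis injI swap_sum_swap_sum)

lemma swap_sum_image_Un: "swap_sum ` (Inl ` A \<union> Inr ` B) = Inl ` B \<union> Inr ` A"
  by (simp add: image_Un image_image Un_commute)

lemma swap_sum_vimage_Un: "swap_sum -` (Inl ` A \<union> Inr ` B) = Inl ` B \<union> Inr ` A"
proof (intro equalityI subsetI)
  fix z assume "z \<in> swap_sum -` (Inl ` A \<union> Inr ` B)"
  then show "z \<in> Inl ` B \<union> Inr ` A"
    by (cases z) auto
qed auto

lemma swap_sum_image_ground: "swap_sum ` ground X = ground X"
  unfolding ground_def swap_sum_image_Un by simp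

lemma gen_line_swap_sum_image: "gen_line X (swap_sum ` B) \<longleftrightarrow> gen_line X B"
  unfolding gen_line_def by (force elim: swap_sum.elims)

definition mirror :: "('a + 'a) set set \<Rightarrow> ('a + 'a) set set" where
  "mirror \<alpha> = image swap_sum ` \<alpha>"

lemma mem_mirror_iff: "U \<in> mirror \<alpha> \<longleftrightarrow> swap_sum ` U \<in> \<alpha>"
proof
  assume "U \<in> mirror \<alpha>"
  then show "swap_sum ` U \<in> \<alpha>"
    unfolding mirror_def by (auto simp: image_image)
next
  assume "swap_sum ` U \<in> \<alpha>"
  then have "swap_sum ` swap_sum ` U \<in> mirror \<alpha>"
    unfolding mirror_def by (rule imageI)
  then show "U \<in> mirror \<alpha>"
    by (simp add: image_image)
qed

lemma mirror_in_PX: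
  assumes "\<alpha> \<in> PX X"
  shows "mirror \<alpha> \<in> PX X"
proof -
  have "partition_on (swap_sum ` ground X) (image swap_sum ` \<alpha> - {{}})"
    using assms inj_swap_sum unfolding PX_def by (auto intro: partition_on_inj_image inj_on_subset)
  moreover have "{} \<notin> \<alpha>"
    using assms unfolding PX_def partition_on_def by blast
  then have "image swap_sum ` \<alpha> - {{}} = mirror \<alpha>"
    unfolding mirror_def by blast
  ultimately have "partition_on (ground X) (mirror \<alpha>)"
    unfolding swap_sum_image_ground by simp
  with assms show ?thesis
    unfolding PX_def mirror_def by (auto simp: gen_line_swap_sum_image)
qed

section \<open>The product \<open>\<circ>\<close>\<close>

definition line_rel :: "('a + 'a) set set \<Rightarrow> ('a set \<times> 'a set) set" where
  "line_rel \<alpha> = {(A, B). Inl ` A \<union> Inr ` B \<in> \<alpha> \<and> A \<noteq> {} \<and> B \<noteq> {}}"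

lemma line_rel_subset:
  assumes "\<alpha> \<in> PX X" "(A, B) \<in> line_rel \<alpha>"
  shows "A \<noteq> {} \<and> B \<noteq> {} \<and> A \<subseteq> X \<and> B \<subseteq> X"
proof -
  have "Inl ` A \<union> Inr ` B \<subseteq> ground X"
    using assms PX_Union unfolding line_rel_def by blast
  with assms(2) show ?thesis
    unfolding line_rel_def by auto
qed

lemma line_rel_meet:
  assumes "\<alpha> \<in> PX X" "(A, B) \<in> line_rel \<alpha>" "(A', B') \<in> line_rel \<alpha>"
    and "A \<inter> A' \<noteq> {} \<or> B \<inter> B' \<noteq> {}"
  shows "A = A' \<and> B = B'"
proof -
  from assms(4) have "(Inl ` A \<union> Inr ` B) \<inter> (Inl ` A' \<union> Inr ` B') \<noteq> {}"
    by blast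
  with assms(1-3) have "Inl ` A \<union> Inr ` B = Inl ` A' \<union> Inr ` B'"
    unfolding line_rel_def using PX_block_eq by blast
  then show ?thesis
    by blast
qed

lemma partial_bij_line_rel: "\<alpha> \<in> PX X \<Longrightarrow> partial_bij (line_rel \<alpha>)"
  unfolding partial_bij_def single_valued_def
  by (auto dest: line_rel_meet simp: line_rel_def)

lemma gen_line_in_iff_line_rel:
  "gen_line X B \<Longrightarrow> B \<in> \<alpha> \<longleftrightarrow> (Inl -` B, Inr -` B) \<in> line_rel \<alpha>"
  using Inl_vimage_Un_Inr_vimage[of B] unfolding line_rel_def gen_line_def by auto

lemma inj_on_line_rel: "inj_on line_rel (PX X)"
proof (rule inj_onI)
  fix \<alpha> \<beta> assume "\<alpha> \<in> PX X" "\<beta> \<in> PX X" "line_rel \<alpha> = line_rel \<beta>"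
  then show "\<alpha> = \<beta>"
    by (metis PX_eqI gen_line_in_iff_line_rel)
qed

lemma line_rel_mirror: "line_rel (mirror \<alpha>) = (line_rel \<alpha>)\<inverse>"
  unfolding line_rel_def mem_mirror_iff swap_sum_image_Un by auto

lemma circ_lines_eq:
  "circ_lines \<alpha> \<beta> = {Inl ` A \<union> Inr ` D | A D. (A, D) \<in> line_rel \<alpha> O line_rel \<beta>}"
  unfolding circ_lines_def line_rel_def by auto

lemma circ_linesE:
  assumes "L \<in> circ_lines \<alpha> \<beta>"
  obtains A D where "L = Inl ` A \<union> Inr ` D" "(A, D) \<in> line_rel \<alpha> O line_rel \<beta>"
  using assms unfolding circ_lines_eq by blast

lemma Inl_image_Un_Inr_image_in_circ_lines_iff:
  "Inl ` A \<union> Inr ` D \<in> circ_lines \<alpha> \<beta> \<longleftrightarrow> (A, D) \<in> line_rel \<alpha> O line_rel \<beta>"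
  unfolding circ_lines_eq by (auto simp: Inl_image_Un_Inr_image_eq_iff)

lemma line_rel_circ_prod: "line_rel (circ_prod X \<alpha> \<beta>) = line_rel \<alpha> O line_rel \<beta>"
proof -
  have "Inl ` A \<union> Inr ` D \<in> circ_prod X \<alpha> \<beta> \<longleftrightarrow> (A, D) \<in> line_rel \<alpha> O line_rel \<beta>"
    if "A \<noteq> {}" "D \<noteq> {}" for A D
    using Inl_image_Un_Inr_image_not_singleton[OF that]
    by (simp add: circ_prod_def Inl_image_Un_Inr_image_in_circ_lines_iff)
  then have "line_rel (circ_prod X \<alpha> \<beta>) =
      {(A, D). (A, D) \<in> line_rel \<alpha> O line_rel \<beta> \<and> A \<noteq> {} \<and> D \<noteq> {}}"
    unfolding line_rel_def[of "circ_prod X \<alpha> \<beta>"] by auto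
  also have "\<dots> = line_rel \<alpha> O line_rel \<beta>"
    unfolding line_rel_def by auto
  finally show ?thesis .
qed

lemma relcomp_line_rel_subset:
  assumes "\<alpha> \<in> PX X" "\<beta> \<in> PX X" "(A, D) \<in> line_rel \<alpha> O line_rel \<beta>"
  shows "A \<noteq> {} \<and> D \<noteq> {} \<and> A \<subseteq> X \<and> D \<subseteq> X"
proof -
  from assms(3) obtain B where "(A, B) \<in> line_rel \<alpha>" "(B, D) \<in> line_rel \<beta>"
    by blast
  with line_rel_subset[OF assms(1)] line_rel_subset[OF assms(2)] show ?thesis
    by blast
qed

lemma relcomp_line_rel_meet:
  assumes \<alpha>: "\<alpha> \<in> PX X" and \<beta>: "\<beta> \<in> PX X"
    and "(A, D) \<in> line_rel \<alpha> O line_rel \<beta>" "(A', D') \<in> line_rel \<alpha> O line_rel \<beta>"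
    and "A \<inter> A' \<noteq> {} \<or> D \<inter> D' \<noteq> {}"
  shows "A = A' \<and> D = D'"
proof -
  from assms(3,4) obtain B B' where
    AB: "(A, B) \<in> line_rel \<alpha>" "(A', B') \<in> line_rel \<alpha>" and
    BD: "(B, D) \<in> line_rel \<beta>" "(B', D') \<in> line_rel \<beta>"
    by blast
  from assms(5) show ?thesis
  proof
    assume "A \<inter> A' \<noteq> {}"
    with AB have "A = A'" "B = B'"
      using line_rel_meet[OF \<alpha>] by blast+
    with BD show ?thesis
      using partial_bij_line_rel[OF \<beta>] unfolding partial_bij_def by (auto dest: single_valuedD)
  next
    assume "D \<inter> D' \<noteq> {}"
    with BD have "B = B'" "D = D'"
      using line_rel_meet[OF \<beta>] by blast+
    with AB show ?thesis
      using partial_bij_line_rel[OF \<alpha>] unfolding partial_bij_def by (auto dest: single_valuedD)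
  qed
qed

lemma partition_on_Un_singletons:
  assumes "\<Union>\<L> \<subseteq> A" "disjoint \<L>" "{} \<notin> \<L>"
  shows "partition_on A (\<L> \<union> {{z} | z. z \<in> A \<and> (\<forall>L\<in>\<L>. z \<notin> L)})"
proof (rule partition_onI)
  show "\<Union>(\<L> \<union> {{z} | z. z \<in> A \<and> (\<forall>L\<in>\<L>. z \<notin> L)}) = A"
    using assms(1) by blast
qed (use assms in \<open>auto simp: disjnt_def disjoint_def\<close>)

lemma partition_on_circ_prod:
  assumes "\<alpha> \<in> PX X" "\<beta> \<in> PX X"
  shows "partition_on (ground X) (circ_prod X \<alpha> \<beta>)"
  unfolding circ_prod_def
proof (rule partition_on_Un_singletons)
  show "\<Union>(circ_lines \<alpha> \<beta>) \<subseteq> ground X"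
  proof (rule Union_least)
    fix L assume "L \<in> circ_lines \<alpha> \<beta>"
    then obtain A D where "L = Inl ` A \<union> Inr ` D" and AD: "(A, D) \<in> line_rel \<alpha> O line_rel \<beta>"
      by (rule circ_linesE)
    with relcomp_line_rel_subset[OF assms AD] show "L \<subseteq> ground X"
      by auto
  qed
  show "{} \<notin> circ_lines \<alpha> \<beta>"
  proof
    assume "{} \<in> circ_lines \<alpha> \<beta>"
    then obtain A D where "{} = Inl ` A \<union> Inr ` D" and AD: "(A, D) \<in> line_rel \<alpha> O line_rel \<beta>"
      by (rule circ_linesE)
    with relcomp_line_rel_subset[OF assms AD] show False
      by simp
  qed
  show "disjoint (circ_lines \<alpha> \<beta>)"
  proof (rule disjointI)
    fix L L' assume "L \<in> circ_lines \<alpha> \<beta>" "L' \<in> circ_lines \<alpha> \<beta>" "L \<noteq> L'"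
    then obtain A D A' D' where "L = Inl ` A \<union> Inr ` D" "(A, D) \<in> line_rel \<alpha> O line_rel \<beta>"
      and "L' = Inl ` A' \<union> Inr ` D'" "(A', D') \<in> line_rel \<alpha> O line_rel \<beta>"
      by (metis circ_linesE)
    moreover from calculation \<open>L \<noteq> L'\<close> have "A \<inter> A' = {} \<and> D \<inter> D' = {}"
      using relcomp_line_rel_meet[OF assms] by blast
    ultimately show "L \<inter> L' = {}"
      by (simp add: Inl_image_Un_Inr_image_Int)
  qed
qed

lemma circ_prod_in_PX:
  assumes "\<alpha> \<in> PX X" "\<beta> \<in> PX X"
  shows "circ_prod X \<alpha> \<beta> \<in> PX X"
proof -
  have "gen_line X L" if "L \<in> circ_lines \<alpha> \<beta>" for L
    using that
  proof (rule circ_linesE)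
    fix A D assume "L = Inl ` A \<union> Inr ` D" and AD: "(A, D) \<in> line_rel \<alpha> O line_rel \<beta>"
    with relcomp_line_rel_subset[OF assms AD] show ?thesis
      by (simp add: gen_line_Inl_image_Un_Inr_image)
  qed
  then have "(\<exists>z. L = {z}) \<or> gen_line X L" if "L \<in> circ_prod X \<alpha> \<beta>" for L
    using that unfolding circ_prod_def by blast
  with partition_on_circ_prod[OF assms] show ?thesis
    unfolding PX_def by blast
qed

lemma inverse_semigroup_circ_prod: "inverse_semigroup (PX X) (circ_prod X)"
proof (rule inverse_semigroup_partial_bij_rep[where \<Phi> = line_rel])
  show "\<exists>\<beta>\<in>PX X. line_rel \<beta> = (line_rel \<alpha>)\<inverse>" if "\<alpha> \<in> PX X" for \<alpha>
    using that mirror_in_PX line_rel_mirror by blast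
qed (simp_all add: circ_prod_in_PX inj_on_line_rel line_rel_circ_prod partial_bij_line_rel)

section \<open>Unions of generalised lines\<close>

text \<open>For a partition in \<open>P\<^sub>X\<close>, the saturated subsets of \<open>X \<union> X'\<close> are exactly the unions of
  generalised lines.\<close>

definition saturated :: "'b set set \<Rightarrow> 'b set \<Rightarrow> bool" where
  "saturated \<P> U \<longleftrightarrow> (\<forall>B\<in>\<P>. B \<inter> U \<noteq> {} \<longrightarrow> B \<subseteq> U \<and> (\<forall>z. B \<noteq> {z}))"

lemma saturated_Un: "saturated (\<P> \<union> \<Q>) U \<longleftrightarrow> saturated \<P> U \<and> saturated \<Q> U"
  unfolding saturated_def by blast

lemma inj_image_eq_singletonD:
  assumes "inj f" "f ` B = {z}"
  shows "\<exists>b. B = {b}"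
proof -
  from assms(2) obtain b where "b \<in> B" "f b = z"
    by (metis imageE insertI1)
  moreover have "c = b" if "c \<in> B" for c
    using assms that \<open>f b = z\<close> by (metis imageI injD singletonD)
  ultimately show ?thesis
    by blast
qed

lemma saturated_image_iff:
  assumes "inj f"
  shows "saturated (image f ` \<P>) U \<longleftrightarrow> saturated \<P> (f -` U)"
proof -
  have "f ` B \<inter> U \<noteq> {} \<longleftrightarrow> B \<inter> f -` U \<noteq> {}" for B
    by blast
  moreover have "(\<forall>z. f ` B \<noteq> {z}) \<longleftrightarrow> (\<forall>z. B \<noteq> {z})" for B
    using inj_image_eq_singletonD[OF assms] by (metis image_empty image_insert)
  ultimately show ?thesis
    unfolding saturated_def by (simp add: image_subset_iff_subset_vimage)
qed

definition block_equiv :: "'b set set \<Rightarrow> 'b rel" where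
  "block_equiv \<P> = (\<Union>B\<in>\<P>. B \<times> B)\<^sup>+"

lemma block_equivI: "B \<in> \<P> \<Longrightarrow> x \<in> B \<Longrightarrow> y \<in> B \<Longrightarrow> (x, y) \<in> block_equiv \<P>"
  unfolding block_equiv_def by (rule r_into_trancl) blast

lemma equiv_block_equiv: "equiv (\<Union>\<P>) (block_equiv \<P>)"
proof (rule equivI)
  show "block_equiv \<P> \<subseteq> \<Union>\<P> \<times> \<Union>\<P>"
    unfolding block_equiv_def by (rule trancl_subset_Sigma) blast
  show "refl_on (\<Union>\<P>) (block_equiv \<P>)"
    by (rule refl_onI) (blast intro: block_equivI)
  show "sym (block_equiv \<P>)"
    unfolding block_equiv_def by (rule sym_trancl) (auto intro: symI)
  show "trans (block_equiv \<P>)"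
    unfolding block_equiv_def by (rule trans_trancl)
qed

lemma saturated_iff_block_equiv:
  "saturated \<P> W \<longleftrightarrow> block_equiv \<P> `` W \<subseteq> W \<and> (\<forall>s. {s} \<in> \<P> \<longrightarrow> s \<notin> W)"
proof
  assume sat: "saturated \<P> W"
  then have "(\<Union>B\<in>\<P>. B \<times> B) `` W \<subseteq> W"
    unfolding saturated_def by blast
  then have "(\<Union>B\<in>\<P>. B \<times> B)\<^sup>* `` W = W"
    by (rule Image_closed_trancl)
  then have "block_equiv \<P> `` W \<subseteq> W"
    unfolding block_equiv_def using trancl_into_rtrancl by fastforce
  with sat show "block_equiv \<P> `` W \<subseteq> W \<and> (\<forall>s. {s} \<in> \<P> \<longrightarrow> s \<notin> W)"
    unfolding saturated_def by blast
next
  assume closed: "block_equiv \<P> `` W \<subseteq> W \<and> (\<forall>s. {s} \<in> \<P> \<longrightarrow> s \<notin> W)"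
  show "saturated \<P> W"
    unfolding saturated_def
  proof (intro ballI impI conjI allI)
    fix B assume "B \<in> \<P>" "B \<inter> W \<noteq> {}"
    then obtain w where "w \<in> B" "w \<in> W"
      by blast
    show "B \<subseteq> W"
    proof
      fix x assume "x \<in> B"
      with \<open>B \<in> \<P>\<close> \<open>w \<in> B\<close> have "(w, x) \<in> block_equiv \<P>"
        by (rule block_equivI)
      with \<open>w \<in> W\<close> closed show "x \<in> W"
        by blast
    qed
    fix z show "B \<noteq> {z}"
    proof
      assume "B = {z}"
      with \<open>w \<in> B\<close> have "{w} \<in> \<P>"
        using \<open>B \<in> \<P>\<close> by simp
      with \<open>w \<in> W\<close> closed show False
        by blast
    qed
  qed
qed

lemma saturated_block_equiv_Image_iff:
  "saturated \<P> (block_equiv \<P> `` A) \<longleftrightarrow> (\<forall>s. {s} \<in> \<P> \<longrightarrow> s \<notin> block_equiv \<P> `` A)"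
proof -
  have "block_equiv \<P> `` (block_equiv \<P> `` A) \<subseteq> block_equiv \<P> `` A"
    using equiv_block_equiv[of \<P>] unfolding equiv_def trans_def by blast
  then show ?thesis
    unfolding saturated_iff_block_equiv by blast
qed

lemma saturated_gen_line_block:
  assumes "\<alpha> \<in> PX X" "B \<in> \<alpha>" "gen_line X B"
  shows "saturated \<alpha> B"
  unfolding saturated_def
proof (intro ballI impI)
  fix C assume "C \<in> \<alpha>" "C \<inter> B \<noteq> {}"
  with assms have "C = B"
    using PX_block_eq by blast
  with assms(3) show "C \<subseteq> B \<and> (\<forall>z. C \<noteq> {z})"
    using gen_line_not_singleton by blast
qed

lemma saturated_PX_block:
  assumes "\<alpha> \<in> PX X" "saturated \<alpha> U" "z \<in> U" "z \<in> ground X"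
  obtains B where "B \<in> \<alpha>" "z \<in> B" "B \<subseteq> U" "gen_line X B"
proof -
  from assms(1,4) obtain B where "B \<in> \<alpha>" "z \<in> B"
    using PX_Union by blast
  with assms(2,3) have "B \<subseteq> U" "\<forall>y. B \<noteq> {y}"
    unfolding saturated_def by blast+
  with assms(1) \<open>B \<in> \<alpha>\<close> \<open>z \<in> B\<close> show ?thesis
    using PX_block_cases that by blast
qed

lemma saturated_PX_gen_line:
  assumes "\<alpha> \<in> PX X" "saturated \<alpha> U" "U \<subseteq> ground X" "U \<noteq> {}"
  shows "gen_line X U"
proof -
  from assms(3,4) obtain z where "z \<in> U" "z \<in> ground X"
    by blast
  then obtain B where "B \<in> \<alpha>" "z \<in> B" "B \<subseteq> U" "gen_line X B"
    by (rule saturated_PX_block[OF assms(1,2)])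
  then show ?thesis
    unfolding gen_line_def by blast
qed

lemma saturated_PX_subsetI:
  assumes "\<alpha> \<in> PX X" "saturated \<alpha> U" "saturated \<alpha> U'" "U \<subseteq> ground X"
    and "U \<inter> range Inl \<subseteq> U'"
  shows "U \<subseteq> U'"
proof
  fix z assume "z \<in> U"
  moreover from this assms(4) have "z \<in> ground X"
    by blast
  ultimately obtain B where B: "B \<in> \<alpha>" "z \<in> B" "B \<subseteq> U" "gen_line X B"
    by (rule saturated_PX_block[OF assms(1,2)])
  then obtain x where "Inl x \<in> B"
    unfolding gen_line_def by blast
  with B assms(5) have "B \<inter> U' \<noteq> {}"
    by blast
  with assms(3) B show "z \<in> U'"
    unfolding saturated_def by blast
qed

definition line_union_rel :: "'a set \<Rightarrow> ('a + 'a) set set \<Rightarrow> ('a set \<times> 'a set) set" where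
  "line_union_rel X \<alpha> = {(S, T). S \<subseteq> X \<and> T \<subseteq> X \<and> saturated \<alpha> (Inl ` S \<union> Inr ` T)}"

lemma saturated_iff_line_union_rel:
  assumes "U \<subseteq> ground X"
  shows "saturated \<alpha> U \<longleftrightarrow> (Inl -` U, Inr -` U) \<in> line_union_rel X \<alpha>"
proof -
  from assms have "Inl -` U \<subseteq> X" "Inr -` U \<subseteq> X"
    by auto
  then show ?thesis
    unfolding line_union_rel_def mem_Collect_eq prod.case Inl_vimage_Un_Inr_vimage by blast
qed

lemma single_valued_line_union_rel:
  assumes "\<alpha> \<in> PX X"
  shows "single_valued (line_union_rel X \<alpha>)"
proof -
  have "T \<subseteq> T'" if "(S, T) \<in> line_union_rel X \<alpha>" "(S, T') \<in> line_union_rel X \<alpha>" for S T T'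
  proof -
    from that have sat: "saturated \<alpha> (Inl ` S \<union> Inr ` T)" "saturated \<alpha> (Inl ` S \<union> Inr ` T')"
      and "S \<subseteq> X" "T \<subseteq> X"
      unfolding line_union_rel_def by auto
    have "Inl ` S \<union> Inr ` T \<subseteq> Inl ` S \<union> Inr ` T'"
    proof (rule saturated_PX_subsetI[OF assms sat])
      show "Inl ` S \<union> Inr ` T \<subseteq> ground X"
        using \<open>S \<subseteq> X\<close> \<open>T \<subseteq> X\<close> by auto
      show "(Inl ` S \<union> Inr ` T) \<inter> range Inl \<subseteq> Inl ` S \<union> Inr ` T'"
        by auto
    qed
    then show ?thesis
      by auto
  qed
  then show ?thesis
    by (intro single_valuedI subset_antisym)
qed

lemma line_union_rel_mirror: "line_union_rel X (mirror \<alpha>) = (line_union_rel X \<alpha>)\<inverse>"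
  unfolding line_union_rel_def mirror_def saturated_image_iff[OF inj_swap_sum] swap_sum_vimage_Un
  by auto

lemma partial_bij_line_union_rel: "\<alpha> \<in> PX X \<Longrightarrow> partial_bij (line_union_rel X \<alpha>)"
  unfolding partial_bij_def
  by (metis line_union_rel_mirror mirror_in_PX single_valued_line_union_rel)

lemma mem_PX_if_saturated_eq:
  assumes \<alpha>: "\<alpha> \<in> PX X" and \<beta>: "\<beta> \<in> PX X"
    and sat_eq: "\<And>U. U \<subseteq> ground X \<Longrightarrow> saturated \<alpha> U \<longleftrightarrow> saturated \<beta> U"
    and "B \<in> \<alpha>" "gen_line X B"
  shows "B \<in> \<beta>"
proof -
  have "B \<subseteq> ground X"
    using PX_Union[OF \<alpha>] \<open>B \<in> \<alpha>\<close> by blast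
  with sat_eq have "saturated \<beta> B"
    using saturated_gen_line_block[OF \<alpha> \<open>B \<in> \<alpha>\<close> \<open>gen_line X B\<close>] by blast
  from \<open>gen_line X B\<close> obtain z where "z \<in> B"
    unfolding gen_line_def by blast
  with \<open>B \<subseteq> ground X\<close> have "z \<in> ground X"
    by blast
  with \<open>z \<in> B\<close> obtain C where C: "C \<in> \<beta>" "z \<in> C" "C \<subseteq> B" "gen_line X C"
    by (rule saturated_PX_block[OF \<beta> \<open>saturated \<beta> B\<close>])
  then have "saturated \<alpha> C"
    using saturated_gen_line_block[OF \<beta>] sat_eq \<open>B \<subseteq> ground X\<close> by blast
  with \<open>B \<in> \<alpha>\<close> \<open>z \<in> B\<close> C have "B \<subseteq> C"
    unfolding saturated_def by blast
  with C show "B \<in> \<beta>"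
    by auto
qed

lemma inj_on_line_union_rel: "inj_on (line_union_rel X) (PX X)"
proof (rule inj_onI)
  fix \<alpha> \<beta> assume \<alpha>: "\<alpha> \<in> PX X" and \<beta>: "\<beta> \<in> PX X"
    and "line_union_rel X \<alpha> = line_union_rel X \<beta>"
  then have "saturated \<alpha> U \<longleftrightarrow> saturated \<beta> U" if "U \<subseteq> ground X" for U
    using that saturated_iff_line_union_rel by metis
  with \<alpha> \<beta> show "\<alpha> = \<beta>"
    by (intro PX_eqI[OF \<alpha> \<beta>]) (metis mem_PX_if_saturated_eq)
qed

section \<open>The product \<open>\<star>\<close>\<close>

lemma inj_relabel_left: "inj relabel_left"
proof (rule injI)
  fix x y :: "'a + 'a" assume "relabel_left x = relabel_left y"
  then show "x = y"
    by (cases x; cases y) simp_all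
qed

lemma inj_relabel_right: "inj relabel_right"
proof (rule injI)
  fix x y :: "'a + 'a" assume "relabel_right x = relabel_right y"
  then show "x = y"
    by (cases x; cases y) simp_all
qed

definition triple_set :: "'a set \<Rightarrow> 'a set \<Rightarrow> 'a set \<Rightarrow> ('a + 'a + 'a) set" where
  "triple_set S M T = Inl ` S \<union> Inr ` (Inl ` M \<union> Inr ` T)"

lemma triple_set_parts: "triple_set (Inl -` W) (Inl -` Inr -` W) (Inr -` Inr -` W) = W"
  by (simp only: triple_set_def Inl_vimage_Un_Inr_vimage)

lemma triple_set_subset_iff:
  "triple_set S M T \<subseteq> triple_set X X X \<longleftrightarrow> S \<subseteq> X \<and> M \<subseteq> X \<and> T \<subseteq> X"
  unfolding triple_set_def by (auto simp: image_subset_iff)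

lemma vimage_relabel_left_triple_set: "relabel_left -` triple_set S M T = Inl ` S \<union> Inr ` M"
proof (rule set_eqI)
  fix z show "z \<in> relabel_left -` triple_set S M T \<longleftrightarrow> z \<in> Inl ` S \<union> Inr ` M"
    by (cases z) (auto simp: triple_set_def image_iff)
qed

lemma vimage_relabel_right_triple_set: "relabel_right -` triple_set S M T = Inl ` M \<union> Inr ` T"
proof (rule set_eqI)
  fix z show "z \<in> relabel_right -` triple_set S M T \<longleftrightarrow> z \<in> Inl ` M \<union> Inr ` T"
    by (cases z) (auto simp: triple_set_def image_iff)
qed

lemma vimage_embed_outer_triple_set: "embed_outer -` triple_set S M T = Inl ` S \<union> Inr ` T"
proof (rule set_eqI)
  fix z show "z \<in> embed_outer -` triple_set S M T \<longleftrightarrow> z \<in> Inl ` S \<union> Inr ` T"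
    by (cases z) (auto simp: triple_set_def image_iff)
qed

lemma embed_outer_in_triple_set_iff: "embed_outer u \<in> triple_set X X X \<longleftrightarrow> u \<in> ground X"
proof -
  have "embed_outer -` triple_set X X X = ground X"
    unfolding vimage_embed_outer_triple_set ground_def ..
  then show ?thesis
    by blast
qed

lemma Union_star_blocks:
  assumes "\<alpha> \<in> PX X" "\<beta> \<in> PX X"
  shows "\<Union>(star_blocks \<alpha> \<beta>) = triple_set X X X"
proof -
  have "\<Union>(star_blocks \<alpha> \<beta>) = relabel_left ` \<Union>\<alpha> \<union> relabel_right ` \<Union>\<beta>"
    unfolding star_blocks_def Union_Un_distrib image_Union ..
  also have "\<dots> = triple_set X X X"
    unfolding PX_Union[OF assms(1)] PX_Union[OF assms(2)] ground_def triple_set_def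
    by (simp add: image_Un image_image Un_ac)
  finally show ?thesis .
qed

lemma saturated_star_blocks_iff:
  "saturated (star_blocks \<alpha> \<beta>) (triple_set S M T) \<longleftrightarrow>
     saturated \<alpha> (Inl ` S \<union> Inr ` M) \<and> saturated \<beta> (Inl ` M \<union> Inr ` T)"
  unfolding star_blocks_def saturated_Un saturated_image_iff[OF inj_relabel_left]
    saturated_image_iff[OF inj_relabel_right] vimage_relabel_left_triple_set
    vimage_relabel_right_triple_set ..

lemma relcomp_line_union_rel_iff:
  "(S, T) \<in> line_union_rel X \<alpha> O line_union_rel X \<beta> \<longleftrightarrow>
     S \<subseteq> X \<and> T \<subseteq> X \<and> (\<exists>M \<subseteq> X. saturated (star_blocks \<alpha> \<beta>) (triple_set S M T))"
  unfolding saturated_star_blocks_iff line_union_rel_def relcomp_unfold by auto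

lemma star_sim_eq_block_equiv: "star_sim \<alpha> \<beta> = block_equiv (star_blocks \<alpha> \<beta>)"
  unfolding star_sim_def block_equiv_def ..

text \<open>\<open>u\<close> lies on a generalised line of \<open>\<alpha> \<star> \<beta>\<close>: no singleton block of \<open>\<alpha>\<close> or \<open>\<beta>\<close>
  is \<open>\<sim>\<close>-equivalent to \<open>u\<close>.\<close>

definition on_star_line :: "('a + 'a) set set \<Rightarrow> ('a + 'a) set set \<Rightarrow> 'a + 'a \<Rightarrow> bool" where
  "on_star_line \<alpha> \<beta> u \<longleftrightarrow> saturated (star_blocks \<alpha> \<beta>) (star_sim \<alpha> \<beta> `` {embed_outer u})"

definition star_rel :: "'a set \<Rightarrow> ('a + 'a) set set \<Rightarrow> ('a + 'a) set set \<Rightarrow> ('a + 'a) rel" where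
  "star_rel X \<alpha> \<beta> = {(u, v). u \<in> ground X \<and> v \<in> ground X \<and>
     (u = v \<or> (embed_outer u, embed_outer v) \<in> star_sim \<alpha> \<beta> \<and> on_star_line \<alpha> \<beta> u)}"

lemma star_prod_eq_quotient: "star_prod X \<alpha> \<beta> = ground X // star_rel X \<alpha> \<beta>"
proof -
  have "on_star_line \<alpha> \<beta> u \<longleftrightarrow>
      \<not> (\<exists>s. {s} \<in> star_blocks \<alpha> \<beta> \<and> s \<in> star_sim \<alpha> \<beta> `` {embed_outer u})" for u
    unfolding on_star_line_def star_sim_eq_block_equiv saturated_block_equiv_Image_iff by blast
  then show ?thesis
    unfolding star_prod_def star_rel_def by simp
qed

context
  fixes X :: "'a set" and \<alpha> \<beta> :: "('a + 'a) set set"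
  assumes \<alpha>: "\<alpha> \<in> PX X" and \<beta>: "\<beta> \<in> PX X"
begin

lemma equiv_star_sim: "equiv (triple_set X X X) (star_sim \<alpha> \<beta>)"
  using equiv_block_equiv[of "star_blocks \<alpha> \<beta>"]
  unfolding star_sim_eq_block_equiv Union_star_blocks[OF \<alpha> \<beta>] .

lemma equiv_star_rel: "equiv (ground X) (star_rel X \<alpha> \<beta>)"
proof (rule equivI)
  from equiv_star_sim have "sym (star_sim \<alpha> \<beta>)" "trans (star_sim \<alpha> \<beta>)"
    by (auto elim: equivE)
  moreover have same_line: "on_star_line \<alpha> \<beta> u \<longleftrightarrow> on_star_line \<alpha> \<beta> v"
    if "(embed_outer u, embed_outer v) \<in> star_sim \<alpha> \<beta>" for u v
    unfolding on_star_line_def equiv_class_eq[OF equiv_star_sim that] ..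
  ultimately show "sym (star_rel X \<alpha> \<beta>)" "trans (star_rel X \<alpha> \<beta>)"
    unfolding star_rel_def sym_def trans_def by blast+
  show "star_rel X \<alpha> \<beta> \<subseteq> ground X \<times> ground X"
    unfolding star_rel_def by auto
  show "refl_on (ground X) (star_rel X \<alpha> \<beta>)"
    by (rule refl_onI) (simp add: star_rel_def)
qed

lemma star_rel_Image:
  assumes "u \<in> ground X"
  shows "star_rel X \<alpha> \<beta> `` {u} =
    (if on_star_line \<alpha> \<beta> u then embed_outer -` (star_sim \<alpha> \<beta> `` {embed_outer u}) else {u})"
proof -
  have "embed_outer -` (star_sim \<alpha> \<beta> `` {embed_outer u}) \<subseteq> ground X"
    using equiv_type[OF equiv_star_sim] embed_outer_in_triple_set_iff by blast
  moreover have "(embed_outer u, embed_outer u) \<in> star_sim \<alpha> \<beta>"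
    using assms equiv_star_sim embed_outer_in_triple_set_iff unfolding equiv_def refl_on_def by blast
  ultimately show ?thesis
    using assms unfolding star_rel_def by auto
qed

lemma gen_line_vimage_embed_outer:
  assumes sat: "saturated (star_blocks \<alpha> \<beta>) W" and "W \<subseteq> triple_set X X X" "W \<noteq> {}"
  shows "gen_line X (embed_outer -` W)"
proof -
  define S M T where "S = Inl -` W" and "M = Inl -` Inr -` W" and "T = Inr -` Inr -` W"
  have W: "W = triple_set S M T"
    unfolding S_def M_def T_def by (rule triple_set_parts[symmetric])
  with assms(2) have "S \<subseteq> X" "M \<subseteq> X" "T \<subseteq> X"
    by (simp_all add: triple_set_subset_iff)
  from sat W have "saturated \<alpha> (Inl ` S \<union> Inr ` M)" "saturated \<beta> (Inl ` M \<union> Inr ` T)"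
    by (simp_all add: saturated_star_blocks_iff)
  moreover have "Inl ` S \<union> Inr ` M \<subseteq> ground X" "Inl ` M \<union> Inr ` T \<subseteq> ground X"
    using \<open>S \<subseteq> X\<close> \<open>M \<subseteq> X\<close> \<open>T \<subseteq> X\<close> by auto
  ultimately have "Inl ` S \<union> Inr ` M \<noteq> {} \<Longrightarrow> gen_line X (Inl ` S \<union> Inr ` M)"
    and "Inl ` M \<union> Inr ` T \<noteq> {} \<Longrightarrow> gen_line X (Inl ` M \<union> Inr ` T)"
    using saturated_PX_gen_line[OF \<alpha>] saturated_PX_gen_line[OF \<beta>] by blast+
  moreover from assms(3) W have "S \<noteq> {} \<or> M \<noteq> {} \<or> T \<noteq> {}"
    by (auto simp: triple_set_def)
  ultimately have "S \<noteq> {}" "T \<noteq> {}"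
    unfolding gen_line_def by auto
  with \<open>S \<subseteq> X\<close> \<open>T \<subseteq> X\<close> show ?thesis
    unfolding W vimage_embed_outer_triple_set by (intro gen_line_Inl_image_Un_Inr_image)
qed

lemma gen_line_star_rel_Image:
  assumes "u \<in> ground X" "on_star_line \<alpha> \<beta> u"
  shows "gen_line X (star_rel X \<alpha> \<beta> `` {u})"
proof -
  have "star_sim \<alpha> \<beta> `` {embed_outer u} \<subseteq> triple_set X X X"
    using equiv_type[OF equiv_star_sim] by blast
  moreover have "embed_outer u \<in> star_sim \<alpha> \<beta> `` {embed_outer u}"
    using equiv_class_self[OF equiv_star_sim] assms(1) embed_outer_in_triple_set_iff by blast
  ultimately show ?thesis
    using gen_line_vimage_embed_outer assms(2) unfolding on_star_line_def star_rel_Image[OF assms(1)]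
    by auto
qed

lemma star_prod_in_PX: "star_prod X \<alpha> \<beta> \<in> PX X"
  unfolding PX_def star_prod_eq_quotient
proof (intro CollectI conjI ballI)
  show "partition_on (ground X) (ground X // star_rel X \<alpha> \<beta>)"
    by (rule partition_on_quotient[OF equiv_star_rel])
  fix C assume "C \<in> ground X // star_rel X \<alpha> \<beta>"
  then obtain u where "C = star_rel X \<alpha> \<beta> `` {u}" "u \<in> ground X"
    by (rule quotientE)
  then show "(\<exists>z. C = {z}) \<or> gen_line X C"
    using gen_line_star_rel_Image star_rel_Image by (cases "on_star_line \<alpha> \<beta> u") auto
qed

lemma saturated_star_prodI:
  assumes sat: "saturated (star_blocks \<alpha> \<beta>) W"
  shows "saturated (star_prod X \<alpha> \<beta>) (embed_outer -` W)"
  unfolding saturated_def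
proof (intro ballI impI conjI allI)
  fix C assume "C \<in> star_prod X \<alpha> \<beta>" "C \<inter> embed_outer -` W \<noteq> {}"
  then obtain u where "u \<in> C" "embed_outer u \<in> W"
    by blast
  from \<open>C \<in> star_prod X \<alpha> \<beta>\<close> obtain w where "C = star_rel X \<alpha> \<beta> `` {w}" "w \<in> ground X"
    unfolding star_prod_eq_quotient by (rule quotientE)
  with \<open>u \<in> C\<close> have u: "u \<in> ground X" and C: "C = star_rel X \<alpha> \<beta> `` {u}"
    using equiv_class_eq[OF equiv_star_rel] equiv_type[OF equiv_star_rel] by blast+
  from sat have closed: "star_sim \<alpha> \<beta> `` W \<subseteq> W" and no_points: "\<forall>s. {s} \<in> star_blocks \<alpha> \<beta> \<longrightarrow> s \<notin> W"
    unfolding saturated_iff_block_equiv star_sim_eq_block_equiv by blast+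
  with \<open>embed_outer u \<in> W\<close> have sub: "star_sim \<alpha> \<beta> `` {embed_outer u} \<subseteq> W"
    by blast
  with no_points have "on_star_line \<alpha> \<beta> u"
    unfolding on_star_line_def star_sim_eq_block_equiv saturated_block_equiv_Image_iff by blast
  with sub show "C \<subseteq> embed_outer -` W"
    unfolding C star_rel_Image[OF u] by auto
  fix z show "C \<noteq> {z}"
    using gen_line_star_rel_Image[OF u \<open>on_star_line \<alpha> \<beta> u\<close>] gen_line_not_singleton unfolding C
    by blast
qed

lemma saturated_star_prod_class:
  assumes sat: "saturated (star_prod X \<alpha> \<beta>) U" and "U \<subseteq> ground X" "u \<in> U"
  shows "on_star_line \<alpha> \<beta> u" "embed_outer -` (star_sim \<alpha> \<beta> `` {embed_outer u}) \<subseteq> U"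
proof -
  from assms(2,3) have u: "u \<in> ground X"
    by blast
  then have "star_rel X \<alpha> \<beta> `` {u} \<in> star_prod X \<alpha> \<beta>"
    unfolding star_prod_eq_quotient by (rule quotientI)
  moreover have "u \<in> star_rel X \<alpha> \<beta> `` {u}"
    using equiv_class_self[OF equiv_star_rel u] .
  ultimately have "star_rel X \<alpha> \<beta> `` {u} \<subseteq> U" "star_rel X \<alpha> \<beta> `` {u} \<noteq> {u}"
    using sat \<open>u \<in> U\<close> unfolding saturated_def by blast+
  then show "on_star_line \<alpha> \<beta> u" "embed_outer -` (star_sim \<alpha> \<beta> `` {embed_outer u}) \<subseteq> U"
    unfolding star_rel_Image[OF u] by (auto split: if_splits)
qed

lemma saturated_star_prodD:
  assumes sat: "saturated (star_prod X \<alpha> \<beta>) U" and "U \<subseteq> ground X"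
  shows "\<exists>W \<subseteq> triple_set X X X. saturated (star_blocks \<alpha> \<beta>) W \<and> embed_outer -` W = U"
proof -
  define W where "W = star_sim \<alpha> \<beta> `` (embed_outer ` U)"
  have "W \<subseteq> triple_set X X X"
    unfolding W_def using equiv_type[OF equiv_star_sim] by blast
  moreover have "saturated (star_blocks \<alpha> \<beta>) W"
    unfolding saturated_iff_block_equiv star_sim_eq_block_equiv[symmetric]
  proof (intro conjI allI impI notI)
    show "star_sim \<alpha> \<beta> `` W \<subseteq> W"
      unfolding W_def using equiv_star_sim unfolding equiv_def trans_def by blast
    fix s assume "{s} \<in> star_blocks \<alpha> \<beta>" "s \<in> W"
    then obtain u where "u \<in> U" "s \<in> star_sim \<alpha> \<beta> `` {embed_outer u}"
      unfolding W_def by blast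
    with saturated_star_prod_class(1)[OF assms] \<open>{s} \<in> star_blocks \<alpha> \<beta>\<close> show False
      unfolding on_star_line_def star_sim_eq_block_equiv saturated_block_equiv_Image_iff by blast
  qed
  moreover have "embed_outer -` W = U"
  proof
    show "embed_outer -` W \<subseteq> U"
      using saturated_star_prod_class(2)[OF assms] unfolding W_def by blast
    show "U \<subseteq> embed_outer -` W"
    proof
      fix u assume "u \<in> U"
      with assms(2) have "embed_outer u \<in> triple_set X X X"
        using embed_outer_in_triple_set_iff by blast
      then have "(embed_outer u, embed_outer u) \<in> star_sim \<alpha> \<beta>"
        using equiv_star_sim unfolding equiv_def refl_on_def by blast
      with \<open>u \<in> U\<close> show "u \<in> embed_outer -` W"
        unfolding W_def by blast
    qed
  qed
  ultimately show ?thesis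
    by blast
qed

lemma saturated_star_prod_iff:
  assumes "S \<subseteq> X" "T \<subseteq> X"
  shows "saturated (star_prod X \<alpha> \<beta>) (Inl ` S \<union> Inr ` T) \<longleftrightarrow>
    (\<exists>M \<subseteq> X. saturated (star_blocks \<alpha> \<beta>) (triple_set S M T))"
proof
  assume "saturated (star_prod X \<alpha> \<beta>) (Inl ` S \<union> Inr ` T)"
  moreover from assms have "Inl ` S \<union> Inr ` T \<subseteq> ground X"
    by auto
  ultimately have "\<exists>W \<subseteq> triple_set X X X.
      saturated (star_blocks \<alpha> \<beta>) W \<and> embed_outer -` W = Inl ` S \<union> Inr ` T"
    by (rule saturated_star_prodD)
  then obtain W where W: "W \<subseteq> triple_set X X X" "saturated (star_blocks \<alpha> \<beta>) W"
    and outer: "embed_outer -` W = Inl ` S \<union> Inr ` T"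
    by blast
  define M where "M = Inl -` Inr -` W"
  have "Inl ` (Inl -` W) \<union> Inr ` (Inr -` Inr -` W) = Inl ` S \<union> Inr ` T"
    using vimage_embed_outer_triple_set[of "Inl -` W" M "Inr -` Inr -` W"] outer
    unfolding M_def triple_set_parts by simp
  then have "W = triple_set S M T"
    using triple_set_parts[of W] unfolding M_def Inl_image_Un_Inr_image_eq_iff by simp
  with W have "M \<subseteq> X" "saturated (star_blocks \<alpha> \<beta>) (triple_set S M T)"
    by (simp_all add: triple_set_subset_iff)
  then show "\<exists>M \<subseteq> X. saturated (star_blocks \<alpha> \<beta>) (triple_set S M T)"
    by blast
next
  assume "\<exists>M \<subseteq> X. saturated (star_blocks \<alpha> \<beta>) (triple_set S M T)"
  then show "saturated (star_prod X \<alpha> \<beta>) (Inl ` S \<union> Inr ` T)"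
    using saturated_star_prodI vimage_embed_outer_triple_set by metis
qed

lemma line_union_rel_star_prod:
  "line_union_rel X (star_prod X \<alpha> \<beta>) = line_union_rel X \<alpha> O line_union_rel X \<beta>"
proof -
  have "(S, T) \<in> line_union_rel X (star_prod X \<alpha> \<beta>) \<longleftrightarrow>
      (S, T) \<in> line_union_rel X \<alpha> O line_union_rel X \<beta>" for S T
    unfolding relcomp_line_union_rel_iff line_union_rel_def[of X "star_prod X \<alpha> \<beta>"]
    using saturated_star_prod_iff by auto
  then show ?thesis
    by (simp add: set_eq_iff)
qed

end

lemma inverse_semigroup_star_prod: "inverse_semigroup (PX X) (star_prod X)"
proof (rule inverse_semigroup_partial_bij_rep[where \<Phi> = "line_union_rel X"])
  show "\<exists>\<beta>\<in>PX X. line_union_rel X \<beta> = (line_union_rel X \<alpha>)\<inverse>" if "\<alpha> \<in> PX X" for \<alpha>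
    using that mirror_in_PX line_union_rel_mirror by blast
qed (simp_all add: star_prod_in_PX inj_on_line_union_rel line_union_rel_star_prod
    partial_bij_line_union_rel)

theorem mainTheorem1:
  fixes X :: "'a set"
  shows "inverse_semigroup (PX X) (star_prod X) \<and> inverse_semigroup (PX X) (circ_prod X)"
  using inverse_semigroup_star_prod inverse_semigroup_circ_prod by blast

end
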